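(* Let $p$ be an odd prime, let $v$ be an integer with $1<v<p-1$, let $g\in\{2,\dots,p-1\}$ be a primitive root modulo $p$, let $t\ge1$ and $b\in\{0,\dots,v-1\}$. Let $$\rho(b,t)=\#\{i\in[1,p-1]:\ g^i\,\%\,p\not\equiv b,\ g^{i+t+1}\,\%\,p\not\equiv b,\ g^{i+j}\,\%\,p\equiv b\ (1\le j\le t)\},$$ all congruences modulo $v$. Write $p=q_t g^t+r_t$ and $p=q_{t+1}g^{t+1}+r_{t+1}$ with $0\le r_t<g^t$, $0\le r_{t+1}<g^{t+1}$. Then $$\left\lfloor\tfrac{g}{v}\right\rfloor^{t-1}\left\lfloor\tfrac{(v-1)g}{v}\right\rfloor\left\lfloor\tfrac{q_t}{v}\right\rfloor-\left\lceil\tfrac{g}{v}\right\rceil^{t}\left\lceil\tfrac{(v-1)g}{v}\right\rceil\left\lceil\tfrac{q_{t+1}+1}{v}\right\rceil\ \le\ \rho(b,t)\ \le\ \left\lceil\tfrac{g}{v}\right\rceil^{t-1}\left\lceil\tfrac{(v-1)g}{v}\right\rceil\left\lceil\tfrac{q_t+1}{v}\right\rceil-\left\lfloor\tfrac{g}{v}\right\rfloor^{t}\left\lfloor\tfrac{(v-1)g}{v}\right\rfloor\left\lfloor\tfrac{q_{t+1}}{v}\right\rfloor.$$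
   Context: $x\,\%\,p$ denotes the least nonnegative remainder of the integer $x$ modulo $p$. $\rho(b,t)$ counts runs of length exactly $t$ of symbol $b$ in the periodic sequence $((g^i\,\%\,p)\,\%\,v)_i$. *)

theory Defs
  imports Complex_Main "HOL-Number_Theory.Number_Theory"
begin

definition rho :: "nat \<Rightarrow> nat \<Rightarrow> nat \<Rightarrow> nat \<Rightarrow> nat \<Rightarrow> nat" where
  "rho p g v b t = card {i \<in> {1..p-1}.
      (g ^ i mod p) mod v \<noteq> b \<and>
      (g ^ (i + t + 1) mod p) mod v \<noteq> b \<and>
      (\<forall>j \<in> {1..t}. (g ^ (i + j) mod p) mod v = b)}"

end

theory Submission
  imports Defs
begin

text \<open>
  As \<open>i \<mapsto> g^i mod p\<close> permutes \<open>{1..p-1}\<close>, \<open>\<rho>(b,t)\<close> counts the residues \<open>x\<close> followed by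
  exactly \<open>t\<close> symbols \<open>b\<close>; it is the difference of the numbers of residues \<open>x\<close>, not
  themselves of symbol \<open>b\<close>, that are followed by at least \<open>t\<close> and by at least \<open>t + 1\<close>
  symbols \<open>b\<close>.

  To count the latter, encode \<open>x < p\<close> by \<open>Q = \<lfloor>g^n x / p\<rfloor> < g^n\<close> and \<open>x mod v\<close>. Since
  \<open>g^j x mod p = g^j x - p \<lfloor>Q / g^(n-j)\<rfloor>\<close>, whether the next \<open>n\<close> symbols are \<open>b\<close> depends
  only on this pair. Reading \<open>Q\<close> in base \<open>g\<close>, every digit \<open>d\<close> after the first must satisfy
  \<open>g b - p d \<equiv> b (mod v)\<close>; as \<open>p\<close> is invertible mod \<open>v\<close>, these \<open>d < g\<close> form a residue
  class, of some size \<open>D\<close> between \<open>\<lfloor>g/v\<rfloor>\<close> and \<open>\<lceil>g/v\<rceil>\<close>. For the first digit, exactly \<open>g\<close>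
  pairs \<open>(d, r)\<close> satisfy \<open>g r - p d \<equiv> b (mod v)\<close>, because \<open>(d, r) \<mapsto> g r - p d mod g v\<close> is a
  bijection onto \<open>[0, g v)\<close> when \<open>gcd(g, p) = 1\<close>; discarding the \<open>D\<close> pairs with \<open>r = b\<close>
  leaves \<open>g - D\<close>. So there are \<open>(g - D) D^(n-1)\<close> admissible pairs, and each value of \<open>Q\<close>
  is taken on an interval of \<open>\<lfloor>p / g^n\<rfloor>\<close> or \<open>\<lfloor>p / g^n\<rfloor> + 1\<close> consecutive \<open>x\<close>, of which
  between \<open>\<lfloor>q/v\<rfloor>\<close> and \<open>\<lceil>(q+1)/v\<rceil>\<close>, where \<open>q = \<lfloor>p / g^n\<rfloor>\<close>, have the prescribed
  residue mod \<open>v\<close>.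
\<close>

lemma inj_on_mod_interval: "inj_on (\<lambda>x. x mod v) {lo..<lo + (v::nat)}"
proof -
  have key: "x = y" if le: "x \<le> y" and lt: "y < x + v" and eq: "x mod v = y mod v" for x y :: nat
  proof -
    obtain s where "y = x + v * s" using mod_eq_nat2E[OF eq le] .
    moreover from this lt have "v * s < v * 1" by simp
    ultimately show ?thesis by (simp add: mult_less_cancel1)
  qed
  show ?thesis
  proof (rule inj_onI)
    fix x y assume "x \<in> {lo..<lo + v}" "y \<in> {lo..<lo + v}" "x mod v = y mod v"
    then show "x = y" using key[of x y] key[of y x] by (cases "x \<le> y") auto
  qed
qed

lemma card_mod_eq_one_period:
  fixes v r lo :: nat
  assumes "r < v"
  shows "card {x \<in> {lo..<lo + v}. x mod v = r} = 1"
proof -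
  have "(\<lambda>x. x mod v) ` {lo..<lo + v} = {..<v}"
    using assms by (intro card_subset_eq) (auto simp: card_image[OF inj_on_mod_interval])
  then obtain x where x: "x \<in> {lo..<lo + v}" "x mod v = r"
    using assms by (metis imageE lessThan_iff)
  then have "{y \<in> {lo..<lo + v}. y mod v = r} = {x}"
    using inj_onD[OF inj_on_mod_interval[of v lo]] by auto
  then show ?thesis by simp
qed

lemma card_mod_eq_interval_bounds:
  fixes v r L lo :: nat
  assumes "r < v"
  shows "L div v \<le> card {x \<in> {lo..<lo + L}. x mod v = r} \<and>
         card {x \<in> {lo..<lo + L}. x mod v = r} \<le> (L + v - 1) div v"
proof (induction L arbitrary: lo rule: less_induct)
  case (less L)
  show ?case
  proof (cases "L < v")
    case True
    have "card {x \<in> {lo..<lo + L}. x mod v = r} \<le> card {x \<in> {lo..<lo + v}. x mod v = r}"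
      using True by (intro card_mono) auto
    then have "card {x \<in> {lo..<lo + L}. x mod v = r} \<le> 1"
      using card_mod_eq_one_period[OF assms] by simp
    moreover have "L = 0 \<or> 1 \<le> (L + v - 1) div v"
      using assms less_eq_div_iff_mult_less_eq[of v 1 "L + v - 1"] by linarith
    ultimately show ?thesis using True by auto
  next
    case False
    let ?rest = "{x \<in> {lo + v..<(lo + v) + (L - v)}. x mod v = r}"
    have "{x \<in> {lo..<lo + L}. x mod v = r} = {x \<in> {lo..<lo + v}. x mod v = r} \<union> ?rest"
      using False by auto
    then have "card {x \<in> {lo..<lo + L}. x mod v = r} = 1 + card ?rest"
      using card_mod_eq_one_period[OF assms]
      by (simp add: card_Un_disjoint disjoint_iff)
    moreover have "(L - v) div v \<le> card ?rest \<and> card ?rest \<le> (L - v + v - 1) div v"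
      using False assms by (intro less.IH) auto
    moreover have "L div v = Suc ((L - v) div v)" "(L + v - 1) div v = Suc ((L - v + v - 1) div v)"
      using False assms le_div_geq[of v L] le_div_geq[of v "L + v - 1"] by simp_all
    ultimately show ?thesis by simp
  qed
qed

lemma ceiling_div_le_iff:
  fixes a G x :: nat
  assumes "0 < G"
  shows "(a + G - 1) div G \<le> x \<longleftrightarrow> a \<le> G * x"
proof -
  have "(a + G - 1) div G \<le> x \<longleftrightarrow> (a + G - 1) div G < Suc x"
    by (rule less_Suc_eq_le[symmetric])
  also have "\<dots> \<longleftrightarrow> a + G - 1 < Suc x * G"
    using div_less_iff_less_mult[OF assms] by blast
  also have "\<dots> \<longleftrightarrow> a \<le> G * x"
    using assms by (simp add: algebra_simps) arith
  finally show ?thesis .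
qed

lemma mult_div_fibre_eq_interval:
  fixes G p Q :: nat
  assumes "0 < G" "0 < p" "Q < G"
  shows "{x. x < p \<and> G * x div p = Q} = {(Q * p + G - 1) div G..<(Q * p + p + G - 1) div G}"
proof -
  have "G * x div p = Q \<longleftrightarrow> Q * p \<le> G * x \<and> \<not> Q * p + p \<le> G * x" for x
    using div_less_iff_less_mult[OF assms(2), of "G * x" Q]
      div_less_iff_less_mult[OF assms(2), of "G * x" "Suc Q"]
    by (auto simp: not_le)
  moreover have "x < p" if "G * x < Q * p + p" for x
  proof -
    have "Q * p + p \<le> G * p" using assms(3) mult_le_mono1[of "Suc Q" G p] by simp
    with that have "G * x < G * p" by linarith
    then show ?thesis by simp
  qed
  moreover have "x < (a + G - 1) div G \<longleftrightarrow> G * x < a" for a x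
    using ceiling_div_le_iff[OF assms(1)] by (metis not_le)
  ultimately show ?thesis
    using ceiling_div_le_iff[OF assms(1)] by auto
qed

lemma add_div_sub_div_bounds:
  fixes c L G :: nat
  assumes "0 < G"
  shows "L div G \<le> (c + L) div G - c div G \<and> (c + L) div G - c div G \<le> L div G + 1"
proof -
  have "(c + L) div G = c div G + L div G + (c mod G + L mod G) div G"
    by (rule div_add1_eq)
  moreover have "c mod G + L mod G < 2 * G"
    using mod_less_divisor[OF assms, of c] mod_less_divisor[OF assms, of L] by linarith
  then have "(c mod G + L mod G) div G < 2"
    by (simp add: div_less_iff_less_mult[OF assms])
  ultimately show ?thesis by simp
qed

lemma card_mult_div_fibre_mod_eq_bounds:
  fixes G p Q v r :: nat
  assumes "0 < G" "0 < p" "Q < G" "r < v"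
  shows "p div G div v \<le> card {x. x < p \<and> G * x div p = Q \<and> x mod v = r} \<and>
         card {x. x < p \<and> G * x div p = Q \<and> x mod v = r} \<le> (p div G + v) div v"
proof -
  define lo where "lo = (Q * p + G - 1) div G"
  define L where "L = (Q * p + G - 1 + p) div G - lo"
  have "Q * p + p + G - 1 = Q * p + G - 1 + p" using assms(1) by simp
  then have "{x. x < p \<and> G * x div p = Q} = {lo..<lo + L}"
    using mult_div_fibre_eq_interval[OF assms(1-3)]
      div_le_mono[of "Q * p + G - 1" "Q * p + G - 1 + p" G]
    by (simp add: lo_def L_def)
  then have fibre:
      "{x. x < p \<and> G * x div p = Q \<and> x mod v = r} = {x \<in> {lo..<lo + L}. x mod v = r}"
    by blast
  have L: "p div G \<le> L \<and> L \<le> p div G + 1"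
    unfolding L_def lo_def by (rule add_div_sub_div_bounds[OF assms(1)])
  then have "p div G div v \<le> L div v"
    by (simp add: div_le_mono)
  moreover have "(L + v - 1) div v \<le> (p div G + v) div v"
    using L by (intro div_le_mono) linarith
  ultimately show ?thesis
    using card_mod_eq_interval_bounds[OF assms(4), of L lo] unfolding fibre by linarith
qed

lemma ceiling_of_nat_divide:
  fixes a v :: nat
  assumes "0 < v"
  shows "\<lceil>real a / real v\<rceil> = int ((a + v - 1) div v)"
proof (rule ceiling_unique)
  define k where "k = (a + v - 1) div v"
  have "a \<le> v * k"
    using ceiling_div_le_iff[OF assms, of a k, folded k_def] by simp
  then show "real a / real v \<le> of_int (int k)"
    using assms by (simp add: divide_le_eq mult.commute flip: of_nat_mult)
  have "v * (k - 1) < a" if "0 < k"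
  proof -
    have "\<not> k \<le> k - 1" using that by simp
    then show ?thesis using ceiling_div_le_iff[OF assms, of a "k - 1", folded k_def] by simp
  qed
  then show "of_int (int k) - 1 < real a / real v"
    using assms by (cases "k = 0") (auto simp: less_divide_eq of_nat_diff algebra_simps
      simp flip: of_nat_mult)
qed

lemma floor_complement_divide:
  fixes g v :: nat
  assumes "0 < v"
  shows "\<lfloor>real ((v - 1) * g) / real v\<rfloor> = int (g - (g + v - 1) div v)"
proof -
  have complement: "real ((v - 1) * g) / real v = - (real g / real v) + of_int (int g)"
    using assms by (simp add: of_nat_diff field_simps)
  have "\<lfloor>real ((v - 1) * g) / real v\<rfloor> = int g - \<lceil>real g / real v\<rceil>"
    unfolding complement floor_add_int[symmetric] floor_minus by simp
  moreover have "(g + v - 1) div v \<le> g"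
    using ceiling_div_le_iff[OF assms, of g g] assms by simp
  ultimately show ?thesis
    by (simp add: ceiling_of_nat_divide[OF assms] of_nat_diff)
qed

lemma ceiling_complement_divide:
  fixes g v :: nat
  assumes "0 < v"
  shows "\<lceil>real ((v - 1) * g) / real v\<rceil> = int (g - g div v)"
proof -
  have complement: "real ((v - 1) * g) / real v = - (real g / real v) + of_int (int g)"
    using assms by (simp add: of_nat_diff field_simps)
  have "\<lceil>real ((v - 1) * g) / real v\<rceil> = int g - \<lfloor>real g / real v\<rfloor>"
    unfolding complement ceiling_add_of_int ceiling_minus by simp
  then show ?thesis
    by (simp add: floor_divide_of_nat_eq of_nat_diff)
qed

lemma inj_on_lincomb_mod:
  fixes p g v :: nat
  assumes "coprime p g" "0 < g" "0 < v"
  shows "inj_on (\<lambda>(d, r). nat ((int g * int r - int p * int d) mod (int g * int v)))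
           ({..<g} \<times> {..<v})"
proof (rule inj_onI)
  fix x y
  assume "x \<in> {..<g} \<times> {..<v}" "y \<in> {..<g} \<times> {..<v}"
    and "(\<lambda>(d, r). nat ((int g * int r - int p * int d) mod (int g * int v))) x
       = (\<lambda>(d, r). nat ((int g * int r - int p * int d) mod (int g * int v))) y"
  moreover obtain d r d' r' where xy: "x = (d, r)" "y = (d', r')"
    by fastforce
  ultimately have bounds: "d < g" "r < v" "d' < g" "r' < v"
    and eq: "[int g * int r - int p * int d = int g * int r' - int p * int d'] (mod int g * int v)"
    using assms(2,3) by (auto simp: cong_def eq_nat_nat_iff)
  from eq have "[int g * int r - int p * int d = int g * int r' - int p * int d'] (mod int g)"
    by (rule cong_modulus_mult)
  then have "int g dvd (int g * int r - int p * int d) - (int g * int r' - int p * int d')"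
    by (simp only: cong_iff_dvd_diff)
  also have "(int g * int r - int p * int d) - (int g * int r' - int p * int d')
      = int g * (int r - int r') - (int p * int d - int p * int d')"
    by (simp add: algebra_simps)
  finally have "[int p * int d = int p * int d'] (mod int g)"
    by (simp add: cong_iff_dvd_diff dvd_diff_right_iff)
  then have "[int d = int d'] (mod int g)"
    using assms(1) by (simp add: cong_mult_lcancel coprime_commute)
  then have d: "d = d'"
    using bounds cong_less_imp_eq_nat[of d g d'] by (simp add: cong_int_iff)
  with eq have "[int g * int r = int g * int r'] (mod int g * int v)"
    by (simp add: cong_iff_dvd_diff)
  then have "[int r = int r'] (mod int v)"
    using assms(2) by (simp add: cong_iff_dvd_diff flip: right_diff_distrib)
  then have "r = r'"
    using bounds cong_less_imp_eq_nat[of r v r'] by (simp add: cong_int_iff)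
  with d xy show "x = y" by simp
qed

lemma card_lincomb_mod_eq:
  fixes p g v b :: nat
  assumes "coprime p g" "0 < g" "b < v"
  shows "card {(d, r). d < g \<and> r < v \<and> (int g * int r - int p * int d) mod int v = int b} = g"
proof -
  define \<phi> where "\<phi> = (\<lambda>(d, r). nat ((int g * int r - int p * int d) mod (int g * int v)))"
  let ?T = "{..<g} \<times> {..<v}"
  have inj: "inj_on \<phi> ?T"
    unfolding \<phi>_def using assms by (intro inj_on_lincomb_mod) simp_all
  have image: "\<phi> ` ?T = {..<g * v}"
  proof (rule card_subset_eq)
    show "\<phi> ` ?T \<subseteq> {..<g * v}"
      using assms by (auto simp: \<phi>_def nat_less_iff)
    show "card (\<phi> ` ?T) = card {..<g * v}"
      using card_image[OF inj] by simp
  qed simp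
  have \<phi>_mod: "\<phi> x mod v = b \<longleftrightarrow> (int g * int (snd x) - int p * int (fst x)) mod int v = int b" for x
  proof -
    have "int (\<phi> x mod v) = (int g * int (snd x) - int p * int (fst x)) mod int v"
      using assms by (simp add: \<phi>_def split_beta of_nat_mod mod_mod_cancel)
    then show ?thesis by linarith
  qed
  have "card {(d, r). d < g \<and> r < v \<and> (int g * int r - int p * int d) mod int v = int b}
      = card {x \<in> ?T. \<phi> x mod v = b}"
    by (rule arg_cong[where f = card]) (auto simp: \<phi>_mod)
  also have "\<dots> = card (\<phi> ` {x \<in> ?T. \<phi> x mod v = b})"
    by (rule card_image[symmetric]) (rule inj_on_subset[OF inj], auto)
  also have "\<phi> ` {x \<in> ?T. \<phi> x mod v = b} = {w \<in> {0..<0 + g * v}. w mod v = b}"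
    using image by auto
  also have "card \<dots> = g"
  proof -
    have "(g * v + v - 1) div v = g"
      using assms(3) by (intro div_nat_eqI) (auto simp: algebra_simps)
    then show ?thesis
      using card_mod_eq_interval_bounds[OF assms(3), of "g * v" 0] assms(3) by simp
  qed
  finally show ?thesis .
qed

lemma coprime_cong_mult_iff_mod_eq:
  fixes p v :: nat and a :: int
  assumes "coprime p v" "0 < v"
  obtains c where "c < v" "\<And>d. [int p * int d = a] (mod int v) \<longleftrightarrow> d mod v = c"
proof -
  obtain \<pi> where \<pi>: "[int p * \<pi> = 1] (mod int v)"
    using assms(1) cong_solve_coprime_int[of "int p" "int v"] by auto
  define c where "c = nat ((\<pi> * a) mod int v)"
  have "[int p * int d = a] (mod int v) \<longleftrightarrow> d mod v = c" for d
  proof -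
    have "[int p * (\<pi> * a) = a] (mod int v)"
      using cong_mult[OF \<pi> cong_refl[of a]] by (simp add: mult.assoc)
    then have "[int p * int d = a] (mod int v) \<longleftrightarrow> [int p * int d = int p * (\<pi> * a)] (mod int v)"
      by (meson cong_sym cong_trans)
    also have "\<dots> \<longleftrightarrow> [int d = \<pi> * a] (mod int v)"
      using assms(1) by (simp add: cong_mult_lcancel)
    also have "\<dots> \<longleftrightarrow> d mod v = c"
      using assms(2) by (auto simp: cong_def c_def of_nat_mod[symmetric] nat_eq_iff2)
    finally show ?thesis .
  qed
  moreover have "c < v"
    using assms(2) by (simp add: c_def nat_less_iff)
  ultimately show thesis using that by blast
qed

definition run_digits :: "nat \<Rightarrow> nat \<Rightarrow> nat \<Rightarrow> nat \<Rightarrow> nat set" where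
  "run_digits p g v b = {d. d < g \<and> (int g * int b - int p * int d) mod int v = int b}"

lemma card_run_digits_bounds:
  fixes p g v b :: nat
  assumes "coprime p v" "b < v"
  shows "g div v \<le> card (run_digits p g v b) \<and> card (run_digits p g v b) \<le> (g + v - 1) div v"
proof -
  have digit_iff: "(int g * int b - int p * int d) mod int v = int b \<longleftrightarrow>
        [int p * int d = int g * int b - int b] (mod int v)" for d
  proof -
    have "(int g * int b - int p * int d) mod int v = int b \<longleftrightarrow>
          [int g * int b - int p * int d = int b] (mod int v)"
      using assms(2) by (simp add: cong_def)
    also have "\<dots> \<longleftrightarrow> [int p * int d = int g * int b - int b] (mod int v)"
      unfolding cong_iff_dvd_diff by (subst dvd_diff_commute) (simp add: algebra_simps)
    finally show ?thesis .
  qed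
  obtain c where c: "c < v"
    "\<And>d. [int p * int d = int g * int b - int b] (mod int v) \<longleftrightarrow> d mod v = c"
    using coprime_cong_mult_iff_mod_eq[OF assms(1)] assms(2) by (metis gr_zeroI not_less0)
  then have "run_digits p g v b = {d \<in> {0..<0 + g}. d mod v = c}"
    by (auto simp: run_digits_def digit_iff)
  then show ?thesis
    using card_mod_eq_interval_bounds[OF c(1), of g 0] by simp
qed

text \<open>
  \<open>admissible p g v b n Q r\<close> says that any \<open>x < p\<close> with \<open>g^n x div p = Q\<close> and
  \<open>x mod v = r\<close> has symbol other than \<open>b\<close> and is followed by \<open>n\<close> symbols \<open>b\<close>
  (see \<open>long_run_starts_eq_admissible\<close>).
\<close>
definition admissible :: "nat \<Rightarrow> nat \<Rightarrow> nat \<Rightarrow> nat \<Rightarrow> nat \<Rightarrow> nat \<Rightarrow> nat \<Rightarrow> bool" where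
  "admissible p g v b n Q r \<longleftrightarrow> r \<noteq> b \<and>
     (\<forall>j\<in>{1..n}. (int (g ^ j) * int r - int p * int (Q div g ^ (n - j))) mod int v = int b)"

definition admissible_pairs :: "nat \<Rightarrow> nat \<Rightarrow> nat \<Rightarrow> nat \<Rightarrow> nat \<Rightarrow> (nat \<times> nat) set" where
  "admissible_pairs p g v b n = {(Q, r). Q < g ^ n \<and> r < v \<and> admissible p g v b n Q r}"

lemma admissible_Suc_iff:
  assumes "0 < g" "1 \<le> n"
  shows "admissible p g v b (Suc n) Q r \<longleftrightarrow>
         admissible p g v b n (Q div g) r \<and> Q mod g \<in> run_digits p g v b"
proof -
  have lower: "Q div g ^ (Suc n - j) = Q div g div g ^ (n - j)" if "j \<le> n" for j
    using that by (simp add: Suc_diff_le div_mult2_eq)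
  have top: "(int (g ^ Suc n) * int r - int p * int Q) mod int v
           = (int g * int b - int p * int (Q mod g)) mod int v"
    if "(int (g ^ n) * int r - int p * int (Q div g)) mod int v = int b"
  proof -
    have "int Q = int g * int (Q div g) + int (Q mod g)"
      by (metis of_nat_add of_nat_mult div_mult_mod_eq mult.commute)
    then have "int (g ^ Suc n) * int r - int p * int Q
        = int g * (int (g ^ n) * int r - int p * int (Q div g)) - int p * int (Q mod g)"
      by (simp add: algebra_simps)
    then show ?thesis using that by (metis mod_diff_left_eq mod_mult_right_eq)
  qed
  have "admissible p g v b (Suc n) Q r \<longleftrightarrow> admissible p g v b n (Q div g) r \<and>
          (int (g ^ Suc n) * int r - int p * int Q) mod int v = int b"
    unfolding admissible_def using lower by (auto simp: atLeastAtMostSuc_conv)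
  also have "\<dots> \<longleftrightarrow> admissible p g v b n (Q div g) r \<and> Q mod g \<in> run_digits p g v b"
  proof (cases "admissible p g v b n (Q div g) r")
    case True
    then have "(int (g ^ n) * int r - int p * int (Q div g)) mod int v = int b"
      using assms(2) by (auto simp: admissible_def dest: bspec[of _ _ n])
    from top[OF this] show ?thesis
      using True assms(1) by (simp add: run_digits_def)
  qed simp
  finally show ?thesis .
qed

lemma card_admissible_pairs_Suc:
  assumes "0 < g" "1 \<le> n"
  shows "card (admissible_pairs p g v b (Suc n)) =
         card (admissible_pairs p g v b n) * card (run_digits p g v b)"
proof -
  have append_bound: "Q * g + d < g ^ Suc n" if "Q < g ^ n" "d < g" for Q d
  proof -
    have "Q * g + d < (Q + 1) * g" using that(2) by simp
    also have "\<dots> \<le> g ^ n * g" using that(1) by (intro mult_right_mono) auto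
    finally show ?thesis by (simp add: mult.commute)
  qed
  have "bij_betw (\<lambda>((Q, r), d). (Q * g + d, r))
          (admissible_pairs p g v b n \<times> run_digits p g v b) (admissible_pairs p g v b (Suc n))"
  proof (rule bij_betw_byWitness[where f' = "\<lambda>(Q, r). ((Q div g, r), Q mod g)"])
    show "\<forall>x \<in> admissible_pairs p g v b n \<times> run_digits p g v b.
        (\<lambda>(Q, r). ((Q div g, r), Q mod g)) ((\<lambda>((Q, r), d). (Q * g + d, r)) x) = x"
      by (auto simp: run_digits_def)
    show "\<forall>y \<in> admissible_pairs p g v b (Suc n).
        (\<lambda>((Q, r), d). (Q * g + d, r)) ((\<lambda>(Q, r). ((Q div g, r), Q mod g)) y) = y"
      by auto
    show "(\<lambda>((Q, r), d). (Q * g + d, r)) ` (admissible_pairs p g v b n \<times> run_digits p g v b)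
        \<subseteq> admissible_pairs p g v b (Suc n)"
      using append_bound admissible_Suc_iff[OF assms] assms(1)
      by (auto simp: admissible_pairs_def run_digits_def)
    show "(\<lambda>(Q, r). ((Q div g, r), Q mod g)) ` admissible_pairs p g v b (Suc n)
        \<subseteq> admissible_pairs p g v b n \<times> run_digits p g v b"
      using admissible_Suc_iff[OF assms] assms(1)
      by (auto simp: admissible_pairs_def div_less_iff_less_mult mult.commute)
  qed
  from bij_betw_same_card[OF this] show ?thesis by (simp add: card_cartesian_product)
qed

lemma card_admissible_pairs_one:
  assumes "coprime p g" "0 < g" "b < v"
  shows "card (admissible_pairs p g v b 1) = g - card (run_digits p g v b)"
proof -
  let ?S = "{(d, r). d < g \<and> r < v \<and> (int g * int r - int p * int d) mod int v = int b}"
  have "admissible_pairs p g v b 1 = ?S - (\<lambda>d. (d, b)) ` run_digits p g v b"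
    by (auto simp: admissible_pairs_def admissible_def run_digits_def)
  moreover have "(\<lambda>d. (d, b)) ` run_digits p g v b \<subseteq> ?S"
    using assms(3) by (auto simp: run_digits_def)
  moreover have "finite ?S"
    by (rule finite_subset[of _ "{..<g} \<times> {..<v}"]) auto
  moreover have "card ((\<lambda>d. (d, b)) ` run_digits p g v b) = card (run_digits p g v b)"
    by (simp add: card_image inj_on_def)
  ultimately show ?thesis
    using card_lincomb_mod_eq[OF assms] by (simp add: card_Diff_subset finite_subset)
qed

lemma card_admissible_pairs:
  assumes "coprime p g" "0 < g" "b < v" "1 \<le> n"
  shows "card (admissible_pairs p g v b n) =
         (g - card (run_digits p g v b)) * card (run_digits p g v b) ^ (n - 1)"
  using assms(4)
proof (induction n rule: dec_induct)
  case base
  then show ?case using card_admissible_pairs_one[OF assms(1-3)] by simp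
next
  case (step n)
  then show ?case
    using card_admissible_pairs_Suc[OF assms(2) step(1)] by (cases n) simp_all
qed

definition long_run_starts :: "nat \<Rightarrow> nat \<Rightarrow> nat \<Rightarrow> nat \<Rightarrow> nat \<Rightarrow> nat set" where
  "long_run_starts p g v b n =
     {x \<in> {1..p-1}. x mod v \<noteq> b \<and> (\<forall>j\<in>{1..n}. (g ^ j * x mod p) mod v = b)}"

lemma residue_primroot_power_bij_betw:
  assumes "prime p" "residue_primroot p g"
  shows "bij_betw (\<lambda>i. g ^ i mod p) {1..p-1} {1..p-1}"
proof -
  let ?f = "\<lambda>i. g ^ i mod p"
  have p: "2 \<le> p" using assms(1) prime_ge_2_nat by blast
  have generator: "?f ` {..<p-1} = {1..p-1}"
    using residue_primroot_is_generator[of p g] assms p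
    by (auto simp: bij_betw_def totient_prime totatives_prime)
  have "[g ^ (p - 1) = 1] (mod p)"
    using assms by (simp add: ord_divides' residue_primroot_def totient_prime)
  then have "?f (p - 1) = ?f 0" using p by (simp add: cong_def)
  moreover have "{1..p-1} = insert (p - 1) {1..<p-1}" "{..<p-1} = insert 0 {1..<p-1}"
    using p by auto
  ultimately have "?f ` {1..p-1} = ?f ` {..<p-1}"
    by (simp only: image_insert)
  with generator have image: "?f ` {1..p-1} = {1..p-1}" by simp
  then have "inj_on ?f {1..p-1}" by (intro eq_card_imp_inj_on) simp_all
  with image show ?thesis by (simp add: bij_betw_def)
qed

lemma rho_eq_card_long_run_starts_diff:
  assumes "prime p" "residue_primroot p g"
  shows "int (rho p g v b t) =
         int (card (long_run_starts p g v b t)) - int (card (long_run_starts p g v b (t + 1)))"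
proof -
  let ?f = "\<lambda>i. g ^ i mod p"
  define exact_run where "exact_run x \<longleftrightarrow> x mod v \<noteq> b \<and> (g ^ (t + 1) * x mod p) mod v \<noteq> b \<and>
      (\<forall>j\<in>{1..t}. (g ^ j * x mod p) mod v = b)" for x
  have bij: "bij_betw ?f {1..p-1} {1..p-1}"
    using residue_primroot_power_bij_betw[OF assms] .
  have shift: "g ^ (i + k) mod p = g ^ k * ?f i mod p" for i k
    by (simp add: power_add mod_mult_right_eq mult.commute)
  have "rho p g v b t = card {i \<in> {1..p-1}. exact_run (?f i)}"
    unfolding rho_def exact_run_def add.assoc shift ..
  also have "\<dots> = card (?f ` {i \<in> {1..p-1}. exact_run (?f i)})"
    using bij by (intro card_image[symmetric]) (auto simp: bij_betw_def intro: inj_on_subset)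
  also have "?f ` {i \<in> {1..p-1}. exact_run (?f i)} = {x \<in> ?f ` {1..p-1}. exact_run x}"
    by blast
  also have "\<dots> = {x \<in> {1..p-1}. exact_run x}"
    using bij by (simp add: bij_betw_def)
  also have "\<dots> = long_run_starts p g v b t - long_run_starts p g v b (t + 1)"
    by (auto simp: exact_run_def long_run_starts_def atLeastAtMostSuc_conv)
  finally have "rho p g v b t = card (long_run_starts p g v b t - long_run_starts p g v b (t + 1))" .
  moreover have "long_run_starts p g v b (t + 1) \<subseteq> long_run_starts p g v b t"
    by (auto simp: long_run_starts_def atLeastAtMostSuc_conv)
  moreover have "finite (long_run_starts p g v b t)"
    by (simp add: long_run_starts_def)
  ultimately show ?thesis
    by (simp add: card_Diff_subset card_mono finite_subset of_nat_diff)
qed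

lemma int_power_mult_mod_eq:
  fixes g p x :: nat
  assumes "0 < g" "j \<le> n"
  shows "int (g ^ j * x mod p)
         = int (g ^ j) * int x - int p * int (g ^ n * x div p div g ^ (n - j))"
proof -
  have "g ^ n * x = g ^ j * x * g ^ (n - j)"
    using assms(2) by (simp add: power_add[symmetric])
  then have "g ^ n * x div p div g ^ (n - j) = g ^ j * x * g ^ (n - j) div (p * g ^ (n - j))"
    by (simp only: div_mult2_eq)
  also have "\<dots> = g ^ j * x div p"
    using assms(1) by (intro div_mult_mult2) simp
  finally have "g ^ n * x div p div g ^ (n - j) = g ^ j * x div p" .
  moreover have "int (a mod p) = int a - int p * int (a div p)" for a
    by (simp add: of_nat_mod of_nat_div minus_mult_div_eq_mod)
  ultimately show ?thesis by (simp add: of_nat_mult)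
qed

lemma long_run_starts_eq_admissible:
  assumes "0 < g" "1 \<le> n"
  shows "long_run_starts p g v b n =
         {x. x < p \<and> admissible p g v b n (g ^ n * x div p) (x mod v)}"
proof -
  have symbol: "(g ^ j * x mod p) mod v = b \<longleftrightarrow>
      (int (g ^ j) * int (x mod v) - int p * int (g ^ n * x div p div g ^ (n - j))) mod int v = int b"
    if "j \<le> n" for j x
  proof -
    have "int ((g ^ j * x mod p) mod v)
        = (int (g ^ j) * int x - int p * int (g ^ n * x div p div g ^ (n - j))) mod int v"
      using int_power_mult_mod_eq[OF assms(1) that] by (simp add: of_nat_mod)
    also have "\<dots>
        = (int (g ^ j) * int (x mod v) - int p * int (g ^ n * x div p div g ^ (n - j))) mod int v"
      unfolding of_nat_mod by (metis mod_diff_left_eq mod_mult_right_eq)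
    finally show ?thesis by linarith
  qed
  have nonzero: "0 < x" if "admissible p g v b n (g ^ n * x div p) (x mod v)" for x
    using that assms(2) by (cases "x = 0") (auto simp: admissible_def dest: bspec[of _ _ 1])
  have symbols: "(\<forall>j\<in>{1..n}. (g ^ j * x mod p) mod v = b) \<longleftrightarrow>
      (\<forall>j\<in>{1..n}. (int (g ^ j) * int (x mod v) - int p * int (g ^ n * x div p div g ^ (n - j)))
         mod int v = int b)" for x
    using symbol by auto
  show ?thesis
  proof (intro equalityI subsetI)
    fix x assume "x \<in> long_run_starts p g v b n"
    then show "x \<in> {x. x < p \<and> admissible p g v b n (g ^ n * x div p) (x mod v)}"
      using symbols[of x] by (auto simp: long_run_starts_def admissible_def)
  next
    fix x assume "x \<in> {x. x < p \<and> admissible p g v b n (g ^ n * x div p) (x mod v)}"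
    then show "x \<in> long_run_starts p g v b n"
      using nonzero[of x] symbols[of x] by (auto simp: long_run_starts_def admissible_def)
  qed
qed

lemma card_long_run_starts_admissible_bounds:
  fixes p g v b n :: nat
  assumes "0 < p" "0 < g" "b < v" "1 \<le> n"
  defines "q \<equiv> p div g ^ n"
  shows "card (admissible_pairs p g v b n) * (q div v) \<le> card (long_run_starts p g v b n) \<and>
         card (long_run_starts p g v b n) \<le> card (admissible_pairs p g v b n) * ((q + v) div v)"
proof -
  let ?A = "admissible_pairs p g v b n"
  define fibre where "fibre = (\<lambda>(Q, r). {x. x < p \<and> g ^ n * x div p = Q \<and> x mod v = r})"
  have "finite ?A"
    by (rule finite_subset[of _ "{..<g ^ n} \<times> {..<v}"]) (auto simp: admissible_pairs_def)
  then have "card (\<Union>a \<in> ?A. fibre a) = (\<Sum>a \<in> ?A. card (fibre a))"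
    by (intro card_UN_disjoint) (auto simp: fibre_def split: prod.splits)
  moreover have "long_run_starts p g v b n = (\<Union>a \<in> ?A. fibre a)"
  proof -
    have "g ^ n * x div p < g ^ n" if "x < p" for x
      using that assms(1,2) by (simp add: div_less_iff_less_mult)
    then show ?thesis
      using assms(3) by (auto simp: long_run_starts_eq_admissible[OF assms(2,4)] fibre_def
          admissible_pairs_def)
  qed
  ultimately have card: "card (long_run_starts p g v b n) = (\<Sum>a \<in> ?A. card (fibre a))"
    by simp
  have "q div v \<le> card (fibre a) \<and> card (fibre a) \<le> (q + v) div v" if a: "a \<in> ?A" for a
  proof -
    obtain Q r where Qr: "a = (Q, r)" "Q < g ^ n" "r < v"
      using a by (cases a) (auto simp: admissible_pairs_def)
    have "0 < g ^ n" using assms(2) by simp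
    from card_mult_div_fibre_mod_eq_bounds[OF this assms(1) Qr(2,3)] show ?thesis
      by (simp add: fibre_def q_def Qr(1))
  qed
  then show ?thesis
    unfolding card
    using sum_bounded_below[of ?A "q div v"] sum_bounded_above[of ?A _ "(q + v) div v"]
    by (simp add: mult.commute)
qed

lemma card_long_run_starts_div_bounds:
  fixes p g v b n :: nat
  assumes "coprime p g" "coprime p v" "0 < p" "0 < g" "b < v" "1 \<le> n"
  defines "q \<equiv> p div g ^ n"
  shows "(g div v) ^ (n - 1) * (g - (g + v - 1) div v) * (q div v)
           \<le> card (long_run_starts p g v b n) \<and>
         card (long_run_starts p g v b n)
           \<le> ((g + v - 1) div v) ^ (n - 1) * (g - g div v) * ((q + v) div v)"
proof -
  define D where "D = card (run_digits p g v b)"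
  have D: "g div v \<le> D" "D \<le> (g + v - 1) div v"
    using card_run_digits_bounds[OF assms(2,5), of g] by (simp_all add: D_def)
  have "card (admissible_pairs p g v b n) = D ^ (n - 1) * (g - D)"
    using card_admissible_pairs[OF assms(1,4,5,6)] by (simp add: D_def mult.commute)
  then have X: "D ^ (n - 1) * (g - D) * (q div v) \<le> card (long_run_starts p g v b n)"
      "card (long_run_starts p g v b n) \<le> D ^ (n - 1) * (g - D) * ((q + v) div v)"
    using card_long_run_starts_admissible_bounds[OF assms(3-6)] unfolding q_def by simp_all
  show ?thesis
  proof
    have "(g div v) ^ (n - 1) * (g - (g + v - 1) div v) * (q div v)
        \<le> D ^ (n - 1) * (g - D) * (q div v)"
      using D by (intro mult_le_mono power_mono diff_le_mono2) auto
    with X(1) show "(g div v) ^ (n - 1) * (g - (g + v - 1) div v) * (q div v)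
        \<le> card (long_run_starts p g v b n)" by linarith
  next
    have "D ^ (n - 1) * (g - D) * ((q + v) div v)
        \<le> ((g + v - 1) div v) ^ (n - 1) * (g - g div v) * ((q + v) div v)"
      using D by (intro mult_le_mono power_mono diff_le_mono2) auto
    with X(2) show "card (long_run_starts p g v b n)
        \<le> ((g + v - 1) div v) ^ (n - 1) * (g - g div v) * ((q + v) div v)" by linarith
  qed
qed

lemma card_long_run_starts_bounds:
  fixes p g v b n :: nat
  assumes "coprime p g" "coprime p v" "0 < p" "0 < g" "b < v" "1 \<le> n"
  defines "q \<equiv> p div g ^ n"
  shows "\<lfloor>real g / real v\<rfloor> ^ (n - 1) * \<lfloor>real ((v - 1) * g) / real v\<rfloor> * \<lfloor>real q / real v\<rfloor>
           \<le> int (card (long_run_starts p g v b n)) \<and>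
         int (card (long_run_starts p g v b n))
           \<le> \<lceil>real g / real v\<rceil> ^ (n - 1) * \<lceil>real ((v - 1) * g) / real v\<rceil> * \<lceil>real (q + 1) / real v\<rceil>"
proof -
  have v: "0 < v" using assms(5) by simp
  show ?thesis
    using card_long_run_starts_div_bounds[OF assms(1-6)]
    unfolding floor_complement_divide[OF v] ceiling_complement_divide[OF v]
    unfolding q_def floor_divide_of_nat_eq ceiling_of_nat_divide[OF v]
    by (simp del: of_nat_diff flip: of_nat_mult of_nat_power)
qed

theorem corollary8:
  fixes p v g t b :: nat
  assumes "prime p" and "odd p"
    and "1 < v" and "v < p - 1"
    and "g \<in> {2..p-1}" and "residue_primroot p g"
    and "t \<ge> 1" and "b \<in> {0..v-1}"
  defines "q1 \<equiv> p div g ^ t" and "q2 \<equiv> p div g ^ (t + 1)"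
  shows "\<lfloor>real g / real v\<rfloor> ^ (t - 1) * \<lfloor>real ((v - 1) * g) / real v\<rfloor> * \<lfloor>real q1 / real v\<rfloor>
           - \<lceil>real g / real v\<rceil> ^ t * \<lceil>real ((v - 1) * g) / real v\<rceil> * \<lceil>real (q2 + 1) / real v\<rceil>
         \<le> int (rho p g v b t) \<and>
         int (rho p g v b t)
         \<le> \<lceil>real g / real v\<rceil> ^ (t - 1) * \<lceil>real ((v - 1) * g) / real v\<rceil> * \<lceil>real (q1 + 1) / real v\<rceil>
           - \<lfloor>real g / real v\<rfloor> ^ t * \<lfloor>real ((v - 1) * g) / real v\<rfloor> * \<lfloor>real q2 / real v\<rfloor>"
proof -
  have p: "0 < p" and g: "0 < g" and b: "b < v"
    using assms(1,3,5,8) prime_gt_0_nat by auto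
  have coprime_g: "coprime p g"
    using assms(6) by (simp add: residue_primroot_def)
  have "\<not> p dvd v"
    using assms(3,4) by (auto dest: dvd_imp_le)
  then have coprime_v: "coprime p v"
    using assms(1) by (simp add: prime_imp_coprime)
  note bounds = card_long_run_starts_bounds[OF coprime_g coprime_v p g b]
  show ?thesis
    using rho_eq_card_long_run_starts_diff[OF assms(1,6), of v b t]
      bounds[OF assms(7)] bounds[OF le_add2, of t, unfolded add_diff_cancel_right']
    unfolding q1_def q2_def by linarith
qed

end
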